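(* Let $n\ge 2$ and let $\overrightarrow{K_{1,n}}$ be an orientation of the star $K_{1,n}$. Then $\overrightarrow{K_{1,n}}$ is $\{0,1,2\}$-antimagic if and only if its center is neither a source nor a sink.
   Context: An oriented graph $\overrightarrow{G}$ is a directed graph obtained from a simple undirected graph by giving each edge one direction. For vertices $u,v$, $d(u,v)$ is the length of a shortest directed path from $u$ to $v$ ($d(u,u)=0$, and $d(u,v)=\infty$ if there is no such path). Let $\partial=\max\{d(u,v)<\infty : u,v\in V(\overrightarrow{G})\}$. A distance set is a nonempty $D\subseteq\{0,1,\dots,\partial\}$. The $D$-neighborhood of $u$ is $N_D(u)=\{v : d(u,v)\in D\}$. For a bijection $f:V(\overrightarrow{G})\to\{1,\dots,|V(\overrightarrow{G})|\}$, the $D$-weight of $u$ is $\omega_D(u)=\sum_{v\in N_D(u)} f(v)$. $\overrightarrow{G}$ is $D$-antimagic if $D\subseteq\{0,\dots,\partial\}$ (so $\{0,1,2\}$-antimagic requires $\partial\ge 2$) and there is such a bijection $f$ with all $D$-weights pairwise distinct. The center of $\overrightarrow{K_{1,n}}$ is its vertex of degree $n$; a source is a vertex of in-degree $0$ and a sink a vertex of out-degree $0$. *)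

theory Defs
  imports Main
begin

text \<open>A directed graph is given by a finite vertex set V and an arc set A \<subseteq> V \<times> V.
  Distance d(u,v): length of a shortest directed path, None meaning infinity.\<close>

definition dist :: "('a \<times> 'a) set \<Rightarrow> 'a \<Rightarrow> 'a \<Rightarrow> nat option" where
  "dist A u v = (if \<exists>k. (u, v) \<in> A ^^ k then Some (LEAST k. (u, v) \<in> A ^^ k) else None)"

definition max_fin_dist :: "'a set \<Rightarrow> ('a \<times> 'a) set \<Rightarrow> nat" where
  "max_fin_dist V A = Max {k. \<exists>u\<in>V. \<exists>v\<in>V. dist A u v = Some k}"

definition D_nbhd :: "'a set \<Rightarrow> ('a \<times> 'a) set \<Rightarrow> nat set \<Rightarrow> 'a \<Rightarrow> 'a set" where
  "D_nbhd V A D u = {v \<in> V. \<exists>k\<in>D. dist A u v = Some k}"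

definition D_weight :: "'a set \<Rightarrow> ('a \<times> 'a) set \<Rightarrow> nat set \<Rightarrow> ('a \<Rightarrow> nat) \<Rightarrow> 'a \<Rightarrow> nat" where
  "D_weight V A D f u = (\<Sum>v\<in>D_nbhd V A D u. f v)"

definition D_antimagic :: "'a set \<Rightarrow> ('a \<times> 'a) set \<Rightarrow> nat set \<Rightarrow> bool" where
  "D_antimagic V A D \<longleftrightarrow> D \<noteq> {} \<and> D \<subseteq> {0..max_fin_dist V A} \<and>
     (\<exists>f. bij_betw f V {1..card V} \<and> inj_on (D_weight V A D f) V)"

definition is_source :: "'a set \<Rightarrow> ('a \<times> 'a) set \<Rightarrow> 'a \<Rightarrow> bool" where
  "is_source V A v \<longleftrightarrow> (\<forall>u\<in>V. (u, v) \<notin> A)"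

definition is_sink :: "'a set \<Rightarrow> ('a \<times> 'a) set \<Rightarrow> 'a \<Rightarrow> bool" where
  "is_sink V A v \<longleftrightarrow> (\<forall>u\<in>V. (v, u) \<notin> A)"

text \<open>Orientations of the star K_{1,n}: vertices 0..n, center 0, leaves 1..n.
  S \<subseteq> {1..n} is the set of leaves whose edge is oriented away from the center;
  every other leaf's edge points towards the center. Every orientation arises this way.\<close>
definition star_arcs :: "nat \<Rightarrow> nat set \<Rightarrow> (nat \<times> nat) set" where
  "star_arcs n S = {(0, i) | i. i \<in> S} \<union> {(i, 0) | i. i \<in> {1..n} - S}"

end

(* Every directed path in an oriented star has length at most 2, and length 2 occurs exactly
   from a leaf pointing to the centre to a leaf pointed at by the centre. Hence the distance
   set {0,1,2} is admissible iff the centre is neither a source nor a sink, and this is the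
   only obstruction: for every orientation the labelling v |-> v + 1 separates the weights.
   An out-leaf i sees only itself (weight i + 1), the centre sees itself and the out-leaves
   (weight W), and an in-leaf i sees itself, the centre and the out-leaves (weight i + 1 + W),
   and out-leaf weights lie below W. *)

theory Submission
  imports Defs
begin

lemma dist_eq_Some_iff:
  "dist A u v = Some k \<longleftrightarrow> (u, v) \<in> A ^^ k \<and> (\<forall>j<k. (u, v) \<notin> A ^^ j)"
proof
  assume "dist A u v = Some k"
  then have "\<exists>k. (u, v) \<in> A ^^ k" and k: "k = (LEAST k. (u, v) \<in> A ^^ k)"
    unfolding dist_def by (auto split: if_splits)
  then show "(u, v) \<in> A ^^ k \<and> (\<forall>j<k. (u, v) \<notin> A ^^ j)"
    using LeastI_ex not_less_Least by metis
next
  assume "(u, v) \<in> A ^^ k \<and> (\<forall>j<k. (u, v) \<notin> A ^^ j)"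
  then show "dist A u v = Some k"
    unfolding dist_def by (auto intro!: Least_equality simp: not_less[symmetric])
qed

lemma dist_self: "dist A u u = Some 0"
  by (simp add: dist_eq_Some_iff)

lemma finite_fin_dists:
  assumes "finite V"
  shows "finite {k. \<exists>u\<in>V. \<exists>v\<in>V. dist A u v = Some k}"
proof (rule finite_subset)
  show "{k. \<exists>u\<in>V. \<exists>v\<in>V. dist A u v = Some k} \<subseteq> (\<lambda>(u, v). the (dist A u v)) ` (V \<times> V)"
    by (force simp: image_iff)
qed (use assms in simp)

lemma le_max_fin_dist_iff:
  assumes "finite V" and "V \<noteq> {}"
  shows "m \<le> max_fin_dist V A \<longleftrightarrow> (\<exists>u\<in>V. \<exists>v\<in>V. \<exists>k\<ge>m. dist A u v = Some k)"
proof -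
  have "{k. \<exists>u\<in>V. \<exists>v\<in>V. dist A u v = Some k} \<noteq> {}"
    using assms(2) dist_self by fastforce
  then show ?thesis
    unfolding max_fin_dist_def using Max_ge_iff[OF finite_fin_dists[OF assms(1)]] by blast
qed

lemma D_nbhd_atMost:
  "D_nbhd V A {0..m} u = {v \<in> V. \<exists>k\<le>m. (u, v) \<in> A ^^ k}"
proof -
  have "(\<exists>k\<in>{0..m}. dist A u v = Some k) \<longleftrightarrow> (\<exists>k\<le>m. (u, v) \<in> A ^^ k)" for v
  proof
    assume "\<exists>k\<le>m. (u, v) \<in> A ^^ k"
    then obtain k where "k \<le> m" and k: "(u, v) \<in> A ^^ k"
      by blast
    define j where "j = (LEAST k. (u, v) \<in> A ^^ k)"
    have "j \<le> k"
      unfolding j_def using k by (rule Least_le)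
    moreover have "dist A u v = Some j"
      unfolding dist_def j_def using k by auto
    ultimately show "\<exists>k\<in>{0..m}. dist A u v = Some k"
      using \<open>k \<le> m\<close> by auto
  qed (auto simp: dist_eq_Some_iff)
  then show ?thesis
    unfolding D_nbhd_def by simp
qed

lemma star_arcs_relpow_iff:
  assumes "S \<subseteq> {1..n}"
  shows "(u, v) \<in> star_arcs n S ^^ k \<longleftrightarrow>
     (k = 0 \<and> u = v) \<or>
     (k = 1 \<and> (u = 0 \<and> v \<in> S \<or> u \<in> {1..n} - S \<and> v = 0)) \<or>
     (k = 2 \<and> u \<in> {1..n} - S \<and> v \<in> S)"
proof (induction k arbitrary: v)
  case (Suc k)
  have "(u, v) \<in> star_arcs n S ^^ Suc k \<longleftrightarrow> (\<exists>w. (u, w) \<in> star_arcs n S ^^ k \<and> (w, v) \<in> star_arcs n S)"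
    by (simp add: relcomp_unfold)
  also have "\<dots> \<longleftrightarrow> (Suc k = 0 \<and> u = v) \<or>
     (Suc k = 1 \<and> (u = 0 \<and> v \<in> S \<or> u \<in> {1..n} - S \<and> v = 0)) \<or>
     (Suc k = 2 \<and> u \<in> {1..n} - S \<and> v \<in> S)"
    unfolding Suc.IH using assms unfolding star_arcs_def by auto
  finally show ?case .
qed simp

lemma is_source_star_center_iff:
  assumes "S \<subseteq> {1..n}"
  shows "is_source {0..n} (star_arcs n S) 0 \<longleftrightarrow> {1..n} - S = {}"
  using assms unfolding is_source_def star_arcs_def by auto

lemma is_sink_star_center_iff:
  assumes "S \<subseteq> {1..n}"
  shows "is_sink {0..n} (star_arcs n S) 0 \<longleftrightarrow> S = {}"
  using assms unfolding is_sink_def star_arcs_def by auto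

lemma two_le_max_fin_dist_star_arcs_iff:
  assumes "S \<subseteq> {1..n}"
  shows "2 \<le> max_fin_dist {0..n} (star_arcs n S) \<longleftrightarrow> S \<noteq> {} \<and> {1..n} - S \<noteq> {}"
proof -
  have two_le_dist_iff: "2 \<le> k \<and> dist (star_arcs n S) u v = Some k \<longleftrightarrow>
      k = 2 \<and> u \<in> {1..n} - S \<and> v \<in> S" for u v k
    using assms unfolding dist_eq_Some_iff star_arcs_relpow_iff[OF assms] less_2_cases_iff by auto
  have "2 \<le> max_fin_dist {0..n} (star_arcs n S) \<longleftrightarrow>
      (\<exists>u\<in>{0..n}. \<exists>v\<in>{0..n}. u \<in> {1..n} - S \<and> v \<in> S)"
    by (simp add: le_max_fin_dist_iff two_le_dist_iff)
  also have "\<dots> \<longleftrightarrow> S \<noteq> {} \<and> {1..n} - S \<noteq> {}"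
  proof -
    have "S \<subseteq> {0..n}" and "{1..n} - S \<subseteq> {0..n}"
      using assms by auto
    then show ?thesis
      by blast
  qed
  finally show ?thesis .
qed

lemma D_nbhd_star_arcs:
  assumes "S \<subseteq> {1..n}" and "u \<in> {0..n}"
  shows "D_nbhd {0..n} (star_arcs n S) {0..2} u =
    (if u = 0 then insert 0 S else if u \<in> S then {u} else insert u (insert 0 S))"
proof -
  have ex_le_2: "(\<exists>k\<le>2. Q k) \<longleftrightarrow> Q 0 \<or> Q 1 \<or> Q 2" for Q :: "nat \<Rightarrow> bool"
    by (auto simp: le_Suc_eq numeral_2_eq_2)
  show ?thesis
    using assms unfolding D_nbhd_atMost ex_le_2 star_arcs_relpow_iff[OF assms(1)] by auto
qed

lemma D_weight_star_arcs_Suc: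
  assumes "S \<subseteq> {1..n}" and "u \<in> {0..n}"
  shows "D_weight {0..n} (star_arcs n S) {0..2} Suc u =
    (if u = 0 then (\<Sum>v\<in>insert 0 S. Suc v)
     else if u \<in> S then Suc u else Suc u + (\<Sum>v\<in>insert 0 S. Suc v))"
proof -
  have "finite S" "0 \<notin> S"
    using assms(1) finite_subset by auto
  then show ?thesis
    using assms unfolding D_weight_def D_nbhd_star_arcs[OF assms] by auto
qed

lemma inj_on_D_weight_star_arcs_Suc:
  assumes "S \<subseteq> {1..n}"
  shows "inj_on (D_weight {0..n} (star_arcs n S) {0..2} Suc) {0..n}"
proof (rule inj_onI)
  define W where "W = (\<Sum>v\<in>insert 0 S. Suc v)"
  have "finite S" "0 \<notin> S"
    using assms finite_subset by auto
  have out_leaf_less: "Suc i < W" if "i \<in> S" for i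
  proof -
    have "Suc i \<le> (\<Sum>v\<in>S. Suc v)"
      using member_le_sum[OF that _ \<open>finite S\<close>, of Suc] by simp
    then show ?thesis
      unfolding W_def using \<open>finite S\<close> \<open>0 \<notin> S\<close> by simp
  qed
  fix x y
  assume "x \<in> {0..n}" "y \<in> {0..n}"
    and "D_weight {0..n} (star_arcs n S) {0..2} Suc x = D_weight {0..n} (star_arcs n S) {0..2} Suc y"
  then have "(if x = 0 then W else if x \<in> S then Suc x else Suc x + W) =
      (if y = 0 then W else if y \<in> S then Suc y else Suc y + W)"
    unfolding W_def by (simp add: D_weight_star_arcs_Suc[OF assms])
  then show "x = y"
    using out_leaf_less[of x] out_leaf_less[of y] by (simp split: if_splits)
qed

theorem mainTheorem6:
  fixes n :: nat and S :: "nat set"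
  assumes "n \<ge> 2" and "S \<subseteq> {1..n}"
  shows "D_antimagic {0..n} (star_arcs n S) {0, 1, 2} \<longleftrightarrow>
         \<not> is_source {0..n} (star_arcs n S) 0 \<and> \<not> is_sink {0..n} (star_arcs n S) 0"
proof -
  have "bij_betw Suc {0..n} {1..card {0..n}}"
    by (simp add: bij_betw_def image_Suc_atLeastAtMost)
  moreover have "{0, 1, 2} = {0..2::nat}"
    by auto
  ultimately have "\<exists>f. bij_betw f {0..n} {1..card {0..n}} \<and>
      inj_on (D_weight {0..n} (star_arcs n S) {0, 1, 2} f) {0..n}"
    using inj_on_D_weight_star_arcs_Suc[OF assms(2)] by auto
  then have "D_antimagic {0..n} (star_arcs n S) {0, 1, 2} \<longleftrightarrow>
      {0, 1, 2} \<subseteq> {0..max_fin_dist {0..n} (star_arcs n S)}"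
    unfolding D_antimagic_def by simp
  also have "\<dots> \<longleftrightarrow> 2 \<le> max_fin_dist {0..n} (star_arcs n S)"
    by auto
  also have "\<dots> \<longleftrightarrow> \<not> is_source {0..n} (star_arcs n S) 0 \<and> \<not> is_sink {0..n} (star_arcs n S) 0"
    unfolding two_le_max_fin_dist_star_arcs_iff[OF assms(2)]
      is_source_star_center_iff[OF assms(2)] is_sink_star_center_iff[OF assms(2)] by blast
  finally show ?thesis .
qed

end
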